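(* Let $d_1,\dots,d_k$ be positive integers. Then the tensor rank of $W_{d_1}\otimes\cdots\otimes W_{d_k}$, viewed as an element of $(\mathbb{C}^2)^{\otimes(d_1+\cdots+d_k)}$, satisfies $$R_{1,\dots,1}(W_{d_1}\otimes\cdots\otimes W_{d_k})\geq d_1+\cdots+d_k-k+1.$$
   Context: With a basis $\{x,y\}$ of $\mathbb{C}^2$, $W_d=\sum_{j=1}^d x\otimes\cdots\otimes x\otimes y\otimes x\otimes\cdots\otimes x\in(\mathbb{C}^2)^{\otimes d}$ ($y$ in the $j$-th position), i.e. the symmetric tensor corresponding to $x^{d-1}y$. $R_{1,\dots,1}$ denotes tensor rank: the minimal $r$ such that the tensor is a sum of $r$ tensors of the form $v_1\otimes\cdots\otimes v_m$ with $v_j\in\mathbb{C}^2$. *)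

theory Defs
  imports Complex_Main
begin

text \<open>A tensor in (C^2)^{\<otimes>m} is represented by its coordinate function on index
words w :: bool list with length w = m (False = basis vector x, True = basis vector y);
values on words of other lengths are irrelevant.\<close>

type_synonym tensor = "bool list \<Rightarrow> complex"

definition sum_of_rank_one :: "nat \<Rightarrow> nat \<Rightarrow> tensor \<Rightarrow> bool" where
  "sum_of_rank_one m r T \<longleftrightarrow>
     (\<exists>v :: nat \<Rightarrow> nat \<Rightarrow> bool \<Rightarrow> complex.
        \<forall>w. length w = m \<longrightarrow> T w = (\<Sum>i<r. \<Prod>j<m. v i j (w ! j)))"

definition tensor_rank :: "nat \<Rightarrow> tensor \<Rightarrow> nat" where
  "tensor_rank m T = (LEAST r. sum_of_rank_one m r T)"

text \<open>W_d = sum over positions of x \<otimes> ... \<otimes> y \<otimes> ... \<otimes> x: coordinate 1 exactly on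
words of length d with exactly one y.\<close>
definition W :: "nat \<Rightarrow> tensor" where
  "W d w = (if length (filter id w) = 1 then 1 else 0)"

definition tensor_prod :: "nat \<Rightarrow> tensor \<Rightarrow> tensor \<Rightarrow> tensor" where
  "tensor_prod m A B w = A (take m w) * B (drop m w)"

fun W_prod :: "nat list \<Rightarrow> tensor" where
  "W_prod [] = (\<lambda>w. 1)"
| "W_prod (d # ds) = tensor_prod d (W d) (W_prod ds)"

end

theory Submission
  imports Defs
begin

text \<open>Contracting the first tensor factor of a rank-r decomposition with a linear form (p, q)
keeps the rank at most r; choosing (p, q) to annihilate the first factor of one summand lowers
it to r - 1. The family of products of blocks a W_d + b x^d is closed under such contractions:
a block of length d + 1 becomes a block of length d with coefficient p a, which stays nonzero
if p is nonzero, while a block of length 1 is absorbed into the next block at no cost. Each of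
the sum of (d_i - 1) shrinking steps therefore costs one unit of rank, and a final unit is
needed because the product never vanishes on the word having one y at the start of each block.\<close>

lemma sum_lessThan_skip:
  fixes f :: "nat \<Rightarrow> 'a::comm_monoid_add"
  assumes "t < r" "f t = 0"
  shows "(\<Sum>i<r. f i) = (\<Sum>i<r - 1. f (if i < t then i else Suc i))"
proof -
  have "(\<Sum>i<r. f i) = (\<Sum>i\<in>{..<r} - {t}. f i)"
    using assms by (simp add: sum.remove)
  also have "\<dots> = (\<Sum>i<r - 1. f (if i < t then i else Suc i))"
    by (rule sum.reindex_bij_witness[where i="\<lambda>i. if i < t then i else Suc i"
          and j="\<lambda>i. if i < t then i else i - 1"]) (use assms in auto)
  finally show ?thesis .
qed

lemma sum_of_rank_one_weighted:
  assumes "0 < m"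
    and "\<forall>w. length w = m \<longrightarrow> T w = (\<Sum>i<r. c i * (\<Prod>j<m. v i j (w ! j)))"
  shows "sum_of_rank_one m r T"
proof -
  obtain m' where m: "m = Suc m'" using assms(1) by (cases m) auto
  define v' where "v' i j = (if j = 0 then (\<lambda>x. c i * v i 0 x) else v i j)" for i j
  have "(\<Prod>j<m. v' i j (w ! j)) = c i * (\<Prod>j<m. v i j (w ! j))" for i w
    unfolding m v'_def by (simp add: prod.lessThan_Suc_shift del: prod.lessThan_Suc)
  then show ?thesis
    using assms(2) unfolding sum_of_rank_one_def by (intro exI[of _ v']) simp
qed

lemma sum_of_rank_one_weighted_drop:
  assumes "0 < m" "t < r" "c t = 0"
    and "\<forall>w. length w = m \<longrightarrow> T w = (\<Sum>i<r. c i * (\<Prod>j<m. v i j (w ! j)))"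
  shows "sum_of_rank_one m (r - 1) T"
proof -
  define sk where "sk i = (if i < t then i else Suc i)" for i :: nat
  have "(\<Sum>i<r. c i * (\<Prod>j<m. v i j (w ! j)))
      = (\<Sum>i<r - 1. c (sk i) * (\<Prod>j<m. v (sk i) j (w ! j)))" for w
    unfolding sk_def by (rule sum_lessThan_skip) (use assms(2,3) in simp_all)
  then show ?thesis
    using assms(4) by (intro sum_of_rank_one_weighted[OF assms(1),
        where c="\<lambda>i. c (sk i)" and v="\<lambda>i. v (sk i)"]) simp
qed

lemma sum_of_rank_one_exists:
  assumes "0 < m"
  shows "\<exists>r. sum_of_rank_one m r T"
proof -
  define U where "U = {u :: bool list. length u = m}"
  have "finite U" using finite_lists_length_eq[of "UNIV :: bool set" m] by (simp add: U_def)
  then obtain h where h: "bij_betw h {0..<card U} U" using ex_bij_betw_nat_finite by blast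
  have "T w = (\<Sum>i<card U. T (h i) * (\<Prod>j<m. of_bool (w ! j = h i ! j)))"
    if w: "length w = m" for w
  proof -
    have "(\<Sum>i<card U. T (h i) * (\<Prod>j<m. of_bool (w ! j = h i ! j)))
        = (\<Sum>u\<in>U. T u * (\<Prod>j<m. of_bool (w ! j = u ! j)))"
      using sum.reindex_bij_betw[OF h] by (simp add: atLeast0LessThan)
    also have "\<dots> = (\<Sum>u\<in>U. T u * of_bool (w = u))"
      using w by (intro sum.cong) (auto simp: U_def prod_zero_iff list_eq_iff_nth_eq)
    also have "\<dots> = T w"
      using \<open>finite U\<close> w by (simp add: U_def if_distrib sum.delta cong: if_cong)
    finally show ?thesis by simp
  qed
  then have "sum_of_rank_one m (card U) T"
    by (intro sum_of_rank_one_weighted[OF assms, where c="\<lambda>i. T (h i)"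
        and v="\<lambda>i j x. of_bool (x = h i ! j)"]) simp
  then show ?thesis ..
qed

lemma sum_of_rank_one_0_eq_0:
  assumes "sum_of_rank_one m 0 T" "length w = m"
  shows "T w = 0"
  using assms unfolding sum_of_rank_one_def by simp

lemma sum_of_rank_one_tensor_rank:
  assumes "\<exists>r. sum_of_rank_one m r T"
  shows "sum_of_rank_one m (tensor_rank m T) T"
  unfolding tensor_rank_def by (rule LeastI_ex[OF assms])

definition contract_first :: "complex \<Rightarrow> complex \<Rightarrow> tensor \<Rightarrow> tensor" where
  "contract_first p q T w = p * T (False # w) + q * T (True # w)"

lemma contract_first_decomposition:
  assumes "\<forall>w. length w = Suc m \<longrightarrow> T w = (\<Sum>i<r. \<Prod>j<Suc m. v i j (w ! j))"
    and "length w = m"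
  shows "contract_first p q T w
    = (\<Sum>i<r. (p * v i 0 False + q * v i 0 True) * (\<Prod>j<m. v i (Suc j) (w ! j)))"
proof -
  have "T (x # w) = (\<Sum>i<r. v i 0 x * (\<Prod>j<m. v i (Suc j) (w ! j)))" for x
    using assms by (simp add: prod.lessThan_Suc_shift del: prod.lessThan_Suc)
  then show ?thesis
    by (simp add: contract_first_def sum_distrib_left sum.distrib algebra_simps)
qed

lemma sum_of_rank_one_contract_first:
  assumes "sum_of_rank_one (Suc m) r T" "0 < m"
  shows "sum_of_rank_one m r (contract_first p q T)"
proof -
  obtain v where "\<forall>w. length w = Suc m \<longrightarrow> T w = (\<Sum>i<r. \<Prod>j<Suc m. v i j (w ! j))"
    using assms(1) unfolding sum_of_rank_one_def by blast
  then show ?thesis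
    by (intro sum_of_rank_one_weighted[OF assms(2),
        where c="\<lambda>i. p * v i 0 False + q * v i 0 True" and v="\<lambda>i j. v i (Suc j)"])
      (simp add: contract_first_decomposition)
qed

lemma sum_of_rank_one_contract_first_drop:
  assumes "sum_of_rank_one (Suc m) r T" "0 < m" "length u = m" "T (True # u) \<noteq> 0"
  obtains p q where "p \<noteq> 0" "sum_of_rank_one m (r - 1) (contract_first p q T)"
proof -
  obtain v where v: "\<forall>w. length w = Suc m \<longrightarrow> T w = (\<Sum>i<r. \<Prod>j<Suc m. v i j (w ! j))"
    using assms(1) unfolding sum_of_rank_one_def by blast
  have "\<exists>t<r. v t 0 True \<noteq> 0"
  proof (rule ccontr)
    assume "\<not> (\<exists>t<r. v t 0 True \<noteq> 0)"
    then have "T (True # u) = 0"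
      using v assms(3) by (auto intro!: sum.neutral prod_zero bexI[of _ 0])
    with assms(4) show False ..
  qed
  then obtain t where t: "t < r" "v t 0 True \<noteq> 0" by blast
  have "sum_of_rank_one m (r - 1) (contract_first (v t 0 True) (- v t 0 False) T)"
    using v t(1) assms(2)
    by (intro sum_of_rank_one_weighted_drop[where t=t
        and c="\<lambda>i. v t 0 True * v i 0 False - v t 0 False * v i 0 True"
        and v="\<lambda>i j. v i (Suc j)"]) (simp_all add: contract_first_decomposition)
  with t(2) show thesis by (rule that)
qed

text \<open>W_comb a b is a W_d + b x^d on words of length d; a block list [(d_1, a_1, b_1), ...]
encodes the tensor product of these blocks.\<close>

definition W_comb :: "complex \<Rightarrow> complex \<Rightarrow> tensor" where
  "W_comb a b u =
    (if length (filter id u) = 1 then a else if length (filter id u) = 0 then b else 0)"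

fun W_comb_prod :: "(nat \<times> complex \<times> complex) list \<Rightarrow> tensor" where
  "W_comb_prod [] w = 1"
| "W_comb_prod ((d, a, b) # L) w = W_comb a b (take d w) * W_comb_prod L (drop d w)"

lemma W_prod_eq_W_comb_prod: "W_prod ds = W_comb_prod (map (\<lambda>d. (d, 1, 0)) ds)"
  by (induction ds) (auto simp: fun_eq_iff tensor_prod_def W_def W_comb_def)

lemma contract_first_W_comb_prod_shrink:
  "contract_first p q (W_comb_prod ((Suc d, a, b) # L)) = W_comb_prod ((d, p * a, p * b + q * a) # L)"
  by (auto simp: fun_eq_iff contract_first_def W_comb_def algebra_simps)

lemma contract_first_W_comb_prod_merge:
  "contract_first 0 1 (W_comb_prod ((Suc 0, a, b) # (d, a', b') # L))
    = W_comb_prod ((d, a * a', a * b') # L)"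
  by (auto simp: fun_eq_iff contract_first_def W_comb_def)

definition block_word :: "(nat \<times> complex \<times> complex) list \<Rightarrow> bool list" where
  "block_word L = concat (map (\<lambda>(d, a, b). True # replicate (d - 1) False) L)"

lemma block_word:
  "\<forall>(d, a, b) \<in> set L. 0 < d \<Longrightarrow> length (block_word L) = sum_list (map fst L)
    \<and> W_comb_prod L (block_word L) = (\<Prod>(d, a, b) \<leftarrow> L. a)"
proof (induction L)
  case (Cons x L)
  obtain d a b where x: "x = (d, a, b)" by (cases x)
  obtain d' where d: "d = Suc d'" using Cons.prems x by (cases d) auto
  have "block_word ((d, a, b) # L) = (True # replicate d' False) @ block_word L"
    by (simp add: block_word_def d)
  then show ?case using Cons by (auto simp: x d W_comb_def)
qed (simp add: block_word_def)

lemma block_list_cases: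
  assumes "\<forall>(d, a, b) \<in> set L. 0 < d"
  obtains "(\<Sum>(d, a, b) \<leftarrow> L. d - 1) = 0"
    | a b d' a' b' L' where "L = (Suc 0, a, b) # (d', a', b') # L'"
    | d a b L' where "L = (Suc d, a, b) # L'" "0 < d"
proof (cases L)
  case (Cons x L')
  obtain d a b where x: "x = (Suc d, a, b)"
    using assms Cons by (cases x) (auto simp: gr0_conv_Suc)
  show thesis
  proof (cases "0 < d")
    case True
    with Cons x show thesis by (intro that(3)) simp_all
  next
    case False
    with Cons x show thesis
      by (cases L') (auto intro: that(1) that(2))
  qed
qed (simp add: that(1))

lemma W_comb_prod_rank_bound:
  assumes "\<forall>(d, a, b) \<in> set L. 0 < d \<and> a \<noteq> 0"
    and "sum_of_rank_one (sum_list (map fst L)) r (W_comb_prod L)"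
  shows "(\<Sum>(d, a, b) \<leftarrow> L. d - 1) + 1 \<le> r"
  using assms
proof (induction "sum_list (map fst L)" arbitrary: L r rule: less_induct)
  case less
  have block: "length (block_word L) = sum_list (map fst L)"
    "W_comb_prod L (block_word L) \<noteq> 0"
    using block_word[of L] less.prems(1) by (fastforce simp: prod_list_zero_iff)+
  have r: "1 \<le> r"
    using sum_of_rank_one_0_eq_0[of _ "W_comb_prod L"] less.prems(2) block
    by (cases r) fastforce+
  consider (no_shrink) "(\<Sum>(d, a, b) \<leftarrow> L. d - 1) = 0"
    | (merge) a b d' a' b' L' where "L = (Suc 0, a, b) # (d', a', b') # L'"
    | (shrink) d a b L' where "L = (Suc d, a, b) # L'" "0 < d"
    by (rule block_list_cases[of L]) (use less.prems(1) in auto)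
  then show ?case
  proof cases
    case no_shrink
    with r show ?thesis by (subst no_shrink) simp
  next
    case (merge a b d' a' b' L')
    define L2 where "L2 = (d', a * a', a * b') # L'"
    have n: "0 < sum_list (map fst L2)" "sum_list (map fst L) = Suc (sum_list (map fst L2))"
      and L2: "\<forall>(d, a, b) \<in> set L2. 0 < d \<and> a \<noteq> 0"
      using less.prems(1) by (auto simp: merge L2_def)
    have "sum_of_rank_one (sum_list (map fst L2)) r (W_comb_prod L2)"
      using sum_of_rank_one_contract_first[of _ r "W_comb_prod L" 0 1] less.prems(2) n
      by (simp add: merge L2_def contract_first_W_comb_prod_merge)
    then have "(\<Sum>(d, a, b) \<leftarrow> L2. d - 1) + 1 \<le> r"
      using less.hyps n(2) L2 by simp
    then show ?thesis by (simp add: merge L2_def)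
  next
    case (shrink d a b L')
    define m where "m = sum_list (map fst L')"
    have n: "sum_list (map fst L) = Suc (d + m)" and "0 < d + m"
      using shrink by (simp_all add: m_def)
    obtain u where u: "block_word L = True # u"
      by (simp add: shrink block_word_def)
    obtain p q where "p \<noteq> 0" and
      "sum_of_rank_one (d + m) (r - 1) (contract_first p q (W_comb_prod L))"
      by (rule sum_of_rank_one_contract_first_drop[of "d + m" r "W_comb_prod L" u])
        (use less.prems(2) block n u \<open>0 < d + m\<close> in simp_all)
    define L2 where "L2 = (d, p * a, p * b + q * a) # L'"
    have "sum_of_rank_one (sum_list (map fst L2)) (r - 1) (W_comb_prod L2)"
      using \<open>sum_of_rank_one (d + m) _ _\<close>
      by (simp add: L2_def m_def shrink contract_first_W_comb_prod_shrink)
    moreover have "\<forall>(d, a, b) \<in> set L2. 0 < d \<and> a \<noteq> 0"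
      using less.prems(1) shrink \<open>p \<noteq> 0\<close> by (auto simp: L2_def)
    moreover have "sum_list (map fst L2) < sum_list (map fst L)"
      using n by (simp add: L2_def m_def)
    ultimately have "(\<Sum>(d, a, b) \<leftarrow> L2. d - 1) + 1 \<le> r - 1"
      using less.hyps by blast
    with r show ?thesis by (simp add: shrink L2_def)
  qed
qed

lemma sum_list_diff_one:
  fixes ds :: "nat list"
  assumes "\<forall>d \<in> set ds. 0 < d"
  shows "(\<Sum>d \<leftarrow> ds. d - 1) = sum_list ds - length ds"
  using assms
proof (induction ds)
  case (Cons d ds)
  have "length ds \<le> sum_list ds"
    using Cons.prems by (induction ds) auto
  with Cons show ?case by auto
qed simp

theorem proposition4p3:
  fixes ds :: "nat list"
  assumes "\<forall>d \<in> set ds. d > 0"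
  shows "tensor_rank (sum_list ds) (W_prod ds) \<ge> sum_list ds - length ds + 1"
proof -
  let ?L = "map (\<lambda>d. (d, 1 :: complex, 0 :: complex)) ds"
  have "\<exists>r. sum_of_rank_one (sum_list ds) r (W_prod ds)"
  proof (cases ds)
    case Nil
    then have "sum_of_rank_one (sum_list ds) 1 (W_prod ds)"
      by (simp add: sum_of_rank_one_def)
    then show ?thesis ..
  next
    case (Cons d ds')
    then show ?thesis
      using assms by (intro sum_of_rank_one_exists) simp
  qed
  then have "sum_of_rank_one (sum_list (map fst ?L)) (tensor_rank (sum_list ds) (W_prod ds))
      (W_comb_prod ?L)"
    using sum_of_rank_one_tensor_rank by (simp add: W_prod_eq_W_comb_prod comp_def)
  then have "(\<Sum>(d, a, b) \<leftarrow> ?L. d - 1) + 1 \<le> tensor_rank (sum_list ds) (W_prod ds)"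
    using assms by (intro W_comb_prod_rank_bound) auto
  then show ?thesis
    using sum_list_diff_one[OF assms] by (simp add: comp_def)
qed

end
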